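(* The graph parameters $\widetilde{\Delta}$, $\mathsf{cdeg}$, $\max\{\mathsf{cideg},\widetilde{\omega}\}$, $\max\{\alpha^{\ast},\widetilde{\omega}\}$ and $\max\{\theta^{\ast},\widetilde{\omega}\}$ are pairwise equivalent, i.e. for any two $p,q$ of them there is a function $g\colon\mathbb{N}\to\mathbb{N}$ with $q(G)\le g(p(G))$ for every finite graph $G$.
   Context: Two vertices are equivalent if they lie in exactly the same maximal cliques. $\widetilde{G}$ is the clique-quotient graph (equivalence classes as vertices, adjacency inherited from representatives) and $\widetilde{\Delta}(G)$ its maximum degree. $\widetilde{\omega}(G)$ is the maximum over maximal cliques $K$ of the number of equivalence classes meeting $K$; $\mathsf{cideg}(G)$ is the maximum over vertices of the number of maximal cliques containing it; $\mathsf{cdeg}(G)$ is the maximum over maximal cliques $K$ of the number of other maximal cliques intersecting $K$. $\alpha^{\ast}(G)=\max_v\alpha(G[N[v]])$, $\theta^{\ast}(G)=\max_v\theta(G[N[v]])$ with $\theta$ the clique-cover number. *)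

theory Defs
  imports Main
begin

text \<open>Vertices are natural numbers;
all parameters are isomorphism invariant, so this covers every finite graph.\<close>

definition simple_graph :: "nat set \<Rightarrow> (nat \<times> nat) set \<Rightarrow> bool" where
  "simple_graph V E \<longleftrightarrow> finite V \<and> E \<subseteq> V \<times> V \<and> sym E \<and> (\<forall>v. (v, v) \<notin> E)"

definition is_clique :: "nat set \<Rightarrow> (nat \<times> nat) set \<Rightarrow> nat set \<Rightarrow> bool" where
  "is_clique V E K \<longleftrightarrow> K \<subseteq> V \<and> (\<forall>x\<in>K. \<forall>y\<in>K. x \<noteq> y \<longrightarrow> (x, y) \<in> E)"

definition is_indep :: "nat set \<Rightarrow> (nat \<times> nat) set \<Rightarrow> nat set \<Rightarrow> bool" where
  "is_indep V E I \<longleftrightarrow> I \<subseteq> V \<and> (\<forall>x\<in>I. \<forall>y\<in>I. (x, y) \<notin> E)"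

definition max_cliques :: "nat set \<Rightarrow> (nat \<times> nat) set \<Rightarrow> nat set set" where
  "max_cliques V E = {K. is_clique V E K \<and> (\<forall>K'. is_clique V E K' \<and> K \<subseteq> K' \<longrightarrow> K' = K)}"

definition clique_equiv :: "nat set \<Rightarrow> (nat \<times> nat) set \<Rightarrow> nat \<Rightarrow> nat \<Rightarrow> bool" where
  "clique_equiv V E u v \<longleftrightarrow>
     {K \<in> max_cliques V E. u \<in> K} = {K \<in> max_cliques V E. v \<in> K}"

text \<open>Equivalence classes (vertices of the clique-quotient graph).\<close>
definition eq_classes :: "nat set \<Rightarrow> (nat \<times> nat) set \<Rightarrow> nat set set" where
  "eq_classes V E = (\<lambda>v. {u \<in> V. clique_equiv V E u v}) ` V"

definition quot_adj :: "nat set \<Rightarrow> (nat \<times> nat) set \<Rightarrow> nat set \<Rightarrow> nat set \<Rightarrow> bool" where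
  "quot_adj V E C D \<longleftrightarrow> C \<noteq> D \<and> (\<exists>x\<in>C. \<exists>y\<in>D. (x, y) \<in> E)"

definition maxn :: "nat set \<Rightarrow> nat" where
  "maxn S = Max (insert 0 S)"

definition quot_Delta :: "nat set \<Rightarrow> (nat \<times> nat) set \<Rightarrow> nat" where
  "quot_Delta V E = maxn ((\<lambda>C. card {D \<in> eq_classes V E. quot_adj V E C D}) ` eq_classes V E)"

definition quot_omega :: "nat set \<Rightarrow> (nat \<times> nat) set \<Rightarrow> nat" where
  "quot_omega V E = maxn ((\<lambda>K. card {C \<in> eq_classes V E. C \<inter> K \<noteq> {}}) ` max_cliques V E)"

definition cideg :: "nat set \<Rightarrow> (nat \<times> nat) set \<Rightarrow> nat" where
  "cideg V E = maxn ((\<lambda>v. card {K \<in> max_cliques V E. v \<in> K}) ` V)"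

definition cdeg :: "nat set \<Rightarrow> (nat \<times> nat) set \<Rightarrow> nat" where
  "cdeg V E = maxn ((\<lambda>K. card {K' \<in> max_cliques V E. K' \<noteq> K \<and> K' \<inter> K \<noteq> {}}) ` max_cliques V E)"

definition closed_nbhd :: "nat set \<Rightarrow> (nat \<times> nat) set \<Rightarrow> nat \<Rightarrow> nat set" where
  "closed_nbhd V E v = insert v {u \<in> V. (v, u) \<in> E}"

definition alpha_on :: "nat set \<Rightarrow> (nat \<times> nat) set \<Rightarrow> nat set \<Rightarrow> nat" where
  "alpha_on V E S = maxn {card I | I. I \<subseteq> S \<and> is_indep V E I}"

definition theta_on :: "nat set \<Rightarrow> (nat \<times> nat) set \<Rightarrow> nat set \<Rightarrow> nat" where
  "theta_on V E S = (LEAST k. \<exists>\<C>. finite \<C> \<and> card \<C> = k \<and>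
       (\<forall>C\<in>\<C>. C \<subseteq> S \<and> is_clique V E C) \<and> \<Union>\<C> = S)"

definition alpha_star :: "nat set \<Rightarrow> (nat \<times> nat) set \<Rightarrow> nat" where
  "alpha_star V E = maxn ((\<lambda>v. alpha_on V E (closed_nbhd V E v)) ` V)"

definition theta_star :: "nat set \<Rightarrow> (nat \<times> nat) set \<Rightarrow> nat" where
  "theta_star V E = maxn ((\<lambda>v. theta_on V E (closed_nbhd V E v)) ` V)"

end

theory Submission
  imports Defs "HOL-Library.Ramsey"
begin

text \<open>
  All five parameters are tied to one hub parameter: the maximum, over vertices \<open>v\<close>,
  of the number of equivalence classes meeting \<open>N[v]\<close>, i.e. of the closed degree of the
  class of \<open>v\<close> in \<open>\<widetilde>G\<close>.
  Classes are cliques and every maximal clique is a union of classes. Hence a maximal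
  clique through \<open>v\<close> is determined by a set of classes meeting \<open>N[v]\<close>, which bounds
  \<open>cideg\<close>; \<open>\<widetilde>\<omega>\<close>, \<open>\<alpha>\<^sup>*\<close> and \<open>\<theta>\<^sup>*\<close> are at most the hub; and \<open>cdeg \<le> \<widetilde>\<omega> \<cdot> cideg\<close>.
  Conversely, \<open>N[v]\<close> is covered by the \<open>cideg\<close> maximal cliques through \<open>v\<close>, or by
  \<open>\<theta>(N[v])\<close> cliques, each meeting at most \<open>\<widetilde>\<omega>\<close> classes; a class inside a maximal
  clique \<open>K\<close> is determined by the other maximal cliques containing it, so
  \<open>\<widetilde>\<omega> \<le> 2^cdeg\<close> and \<open>cideg \<le> cdeg + 1\<close>; and one representative per class meeting
  \<open>N[v]\<close> gives a vertex set with no clique larger than \<open>\<widetilde>\<omega>\<close> and no independent set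
  larger than \<open>\<alpha>\<^sup>*\<close>, whose size Ramsey's theorem bounds.
\<close>

lemma maxn_ge: "finite S \<Longrightarrow> x \<in> S \<Longrightarrow> x \<le> maxn S"
  unfolding maxn_def by simp

lemma maxn_le: "finite S \<Longrightarrow> (\<And>x. x \<in> S \<Longrightarrow> x \<le> b) \<Longrightarrow> maxn S \<le> b"
  unfolding maxn_def by simp

lemma maxn_image_ge: "finite A \<Longrightarrow> a \<in> A \<Longrightarrow> f a \<le> maxn (f ` A)"
  by (simp add: maxn_ge)

lemma maxn_image_le: "finite A \<Longrightarrow> (\<And>a. a \<in> A \<Longrightarrow> f a \<le> b) \<Longrightarrow> maxn (f ` A) \<le> b"
  by (rule maxn_le) auto

lemma card_UN_le_mult:
  assumes "finite I" "\<And>i. i \<in> I \<Longrightarrow> card (A i) \<le> k"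
  shows "card (\<Union>i\<in>I. A i) \<le> card I * k"
proof -
  have "card (\<Union>i\<in>I. A i) \<le> (\<Sum>i\<in>I. card (A i))" by (rule card_UN_le[OF assms(1)])
  also have "\<dots> \<le> card I * k" using sum_bounded_above[of I "\<lambda>i. card (A i)" k] assms(2) by simp
  finally show ?thesis .
qed

definition ramsey_number :: "nat \<Rightarrow> nat" where
  "ramsey_number k = (LEAST r. \<forall>(V :: nat set) (E :: nat set set). finite V \<and> card V \<ge> r \<longrightarrow>
      (\<exists>R\<subseteq>V. card R = k \<and> clique R E \<or> card R = k \<and> indep R E))"

lemma ramsey_numberE:
  fixes S :: "nat set" and E :: "nat set set"
  assumes "finite S" "card S \<ge> ramsey_number k"
  obtains R where "R \<subseteq> S" "card R = k" "clique R E \<or> indep R E"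
proof -
  let ?P = "\<lambda>r. \<forall>(V :: nat set) (E :: nat set set). finite V \<and> card V \<ge> r \<longrightarrow>
      (\<exists>R\<subseteq>V. card R = k \<and> clique R E \<or> card R = k \<and> indep R E)"
  obtain r where "?P r" using ramsey2[where 'a = nat and m = k and n = k] by blast
  then have "?P (ramsey_number k)" unfolding ramsey_number_def by (rule LeastI)
  then have "\<exists>R\<subseteq>S. card R = k \<and> clique R E \<or> card R = k \<and> indep R E"
    using assms by blast
  then show ?thesis using that by blast
qed

subsection \<open>Clique equivalence classes\<close>

definition eq_class :: "nat set \<Rightarrow> (nat \<times> nat) set \<Rightarrow> nat \<Rightarrow> nat set" where
  "eq_class V E v = {u \<in> V. clique_equiv V E u v}"

definition classes_meeting :: "nat set \<Rightarrow> (nat \<times> nat) set \<Rightarrow> nat set \<Rightarrow> nat set set" where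
  "classes_meeting V E S = {X \<in> eq_classes V E. X \<inter> S \<noteq> {}}"

text \<open>The hub parameter; it equals \<open>\<widetilde>\<Delta> + 1\<close> on nonempty graphs.\<close>

definition max_nbhd_classes :: "nat set \<Rightarrow> (nat \<times> nat) set \<Rightarrow> nat" where
  "max_nbhd_classes V E = maxn ((\<lambda>v. card (classes_meeting V E (closed_nbhd V E v))) ` V)"

locale finite_simple_graph =
  fixes V :: "nat set" and E :: "(nat \<times> nat) set"
  assumes simple: "simple_graph V E"
begin

abbreviation "MC \<equiv> max_cliques V E"
abbreviation "CL \<equiv> eq_classes V E"
abbreviation "cls \<equiv> eq_class V E"
abbreviation "meets \<equiv> classes_meeting V E"
abbreviation "nb \<equiv> closed_nbhd V E"
abbreviation "eqv \<equiv> clique_equiv V E"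

lemma finite_V: "finite V"
  using simple simple_graph_def by auto

lemma edge_vertices: "(x, y) \<in> E \<Longrightarrow> x \<in> V \<and> y \<in> V"
  using simple simple_graph_def by auto

lemma edge_sym: "(x, y) \<in> E \<Longrightarrow> (y, x) \<in> E"
  using simple unfolding simple_graph_def sym_def by auto

lemma edge_irrefl: "(x, x) \<notin> E"
  using simple simple_graph_def by auto

lemma max_clique_is_clique: "K \<in> MC \<Longrightarrow> is_clique V E K"
  by (simp add: max_cliques_def)

lemma max_clique_subset: "K \<in> MC \<Longrightarrow> K \<subseteq> V"
  by (simp add: max_cliques_def is_clique_def)

lemma finite_max_cliques: "finite MC"
  by (rule finite_subset[of _ "Pow V"]) (auto dest: max_clique_subset simp: finite_V)

lemma clique_subset_max_clique:
  assumes "is_clique V E C"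
  obtains K where "K \<in> MC" "C \<subseteq> K"
proof -
  let ?A = "{K. is_clique V E K \<and> C \<subseteq> K}"
  have "finite ?A" by (rule finite_subset[of _ "Pow V"]) (auto simp: is_clique_def finite_V)
  moreover have "?A \<noteq> {}" using assms by blast
  ultimately obtain K where K: "K \<in> ?A" "\<forall>K'\<in>?A. K \<le> K' \<longrightarrow> K = K'"
    by (meson finite_has_maximal)
  then have "K \<in> MC" unfolding max_cliques_def by auto
  then show ?thesis using K(1) that by blast
qed

lemma vertex_in_max_clique:
  assumes "v \<in> V" obtains K where "K \<in> MC" "v \<in> K"
  using clique_subset_max_clique[of "{v}"] assms by (auto simp: is_clique_def)

lemma edge_in_max_clique:
  assumes "(u, v) \<in> E" obtains K where "K \<in> MC" "u \<in> K" "v \<in> K"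
proof -
  have "is_clique V E {u, v}"
    using assms edge_sym[OF assms] edge_vertices[OF assms] by (auto simp: is_clique_def)
  then obtain K where "K \<in> MC" "{u, v} \<subseteq> K" by (rule clique_subset_max_clique)
  then show ?thesis using that by blast
qed

lemma clique_equiv_mem:
  assumes "eqv x y" "K \<in> MC"
  shows "x \<in> K \<longleftrightarrow> y \<in> K"
proof -
  have "K \<in> {K \<in> MC. x \<in> K} \<longleftrightarrow> K \<in> {K \<in> MC. y \<in> K}"
    using assms(1) unfolding clique_equiv_def by simp
  then show ?thesis using assms(2) by simp
qed

lemma clique_equiv_sym: "eqv x y \<Longrightarrow> eqv y x"
  by (simp add: clique_equiv_def)

lemma clique_equiv_adjacent:
  assumes "eqv x y" "x \<in> V" "x \<noteq> y"
  shows "(x, y) \<in> E"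
proof -
  obtain K where K: "K \<in> MC" "x \<in> K" using vertex_in_max_clique[OF assms(2)] by blast
  then have "y \<in> K" using clique_equiv_mem[OF assms(1)] by blast
  then show ?thesis using max_clique_is_clique[OF K(1)] K(2) assms(3) by (simp add: is_clique_def)
qed

lemma clique_equiv_edge:
  assumes "eqv x x'" "(x, y) \<in> E" "y \<noteq> x'"
  shows "(x', y) \<in> E"
proof -
  obtain K where K: "K \<in> MC" "x \<in> K" "y \<in> K" by (rule edge_in_max_clique[OF assms(2)])
  then have "x' \<in> K" using clique_equiv_mem[OF assms(1)] by blast
  then show ?thesis using max_clique_is_clique[OF K(1)] K(3) assms(3) by (simp add: is_clique_def)
qed

lemma eq_class_self: "x \<in> V \<Longrightarrow> x \<in> cls x"
  by (simp add: eq_class_def clique_equiv_def)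

lemma mem_eq_class_iff: "u \<in> cls x \<longleftrightarrow> u \<in> V \<and> eqv u x"
  by (simp add: eq_class_def)

lemma eq_class_eq: "x \<in> cls y \<Longrightarrow> cls x = cls y"
  unfolding eq_class_def clique_equiv_def by auto

lemma eq_classes_eq: "CL = cls ` V"
  by (simp add: eq_classes_def eq_class_def[abs_def])

lemma finite_eq_classes: "finite CL"
  by (simp add: eq_classes_eq finite_V)

lemma eq_class_in_eq_classes: "x \<in> V \<Longrightarrow> cls x \<in> CL"
  by (simp add: eq_classes_eq)

lemma eq_classesD:
  assumes "X \<in> CL" "x \<in> X"
  shows "X = cls x" "x \<in> V"
proof -
  obtain y where y: "X = cls y" using assms(1) eq_classes_eq by blast
  then have "x \<in> cls y" using assms(2) by simp
  then show "X = cls x" "x \<in> V" using y eq_class_eq mem_eq_class_iff by auto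
qed

lemma eq_class_nonempty: "X \<in> CL \<Longrightarrow> X \<noteq> {}"
  unfolding eq_classes_eq using eq_class_self by blast

lemma eq_class_is_clique: "X \<in> CL \<Longrightarrow> is_clique V E X"
  unfolding is_clique_def
proof safe
  fix x y assume X: "X \<in> CL" "x \<in> X" "y \<in> X" "x \<noteq> y"
  then have "x \<in> cls y" using eq_classesD(1)[OF X(1) X(3)] by simp
  then have "eqv x y" "x \<in> V" using mem_eq_class_iff by simp_all
  then show "(x, y) \<in> E" using clique_equiv_adjacent X(4) by blast
qed (use eq_classesD(2) in blast)

lemma eq_class_subset_max_clique:
  assumes "K \<in> MC" "X \<in> CL" "X \<inter> K \<noteq> {}"
  shows "X \<subseteq> K"
proof
  obtain x where x: "x \<in> X" "x \<in> K" using assms by blast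
  fix u assume "u \<in> X"
  then have "eqv u x" using eq_classesD(1)[OF assms(2) x(1)] mem_eq_class_iff by simp
  then show "u \<in> K" using clique_equiv_mem assms(1) x by blast
qed

lemma mem_max_clique_iff_eq_class_subset:
  assumes "K \<in> MC" "X \<in> CL" "x \<in> X"
  shows "x \<in> K \<longleftrightarrow> X \<subseteq> K"
  using eq_class_subset_max_clique[OF assms(1,2)] assms(3) by blast

lemma eq_class_subset_closed_nbhd:
  assumes "v \<in> V" "X \<in> CL" "X \<inter> nb v \<noteq> {}"
  shows "X \<subseteq> nb v"
proof
  obtain x where x: "x \<in> X" "x \<in> nb v" using assms by blast
  fix y assume y: "y \<in> X"
  have yx: "eqv y x" and yV: "y \<in> V"
    using eq_classesD(1)[OF assms(2) x(1)] y mem_eq_class_iff by simp_all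
  show "y \<in> nb v"
  proof (cases "y = v")
    case False
    have "(y, v) \<in> E"
    proof (cases "x = v")
      case True
      then show ?thesis using clique_equiv_adjacent yx yV False by blast
    next
      case False
      then have "(x, v) \<in> E" using x(2) edge_sym by (simp add: closed_nbhd_def)
      then show ?thesis using clique_equiv_edge[OF clique_equiv_sym[OF yx]] \<open>y \<noteq> v\<close> by blast
    qed
    then show ?thesis using edge_sym yV by (auto simp: closed_nbhd_def)
  qed (simp add: closed_nbhd_def)
qed

lemma closed_nbhd_subset: "v \<in> V \<Longrightarrow> nb v \<subseteq> V"
  by (auto simp: closed_nbhd_def)

lemma max_clique_subset_closed_nbhd: "K \<in> MC \<Longrightarrow> v \<in> K \<Longrightarrow> K \<subseteq> nb v"
  using max_clique_is_clique unfolding is_clique_def closed_nbhd_def by auto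

lemma closed_nbhd_eq_Union_max_cliques: "v \<in> V \<Longrightarrow> nb v = \<Union>{K \<in> MC. v \<in> K}"
proof
  assume v: "v \<in> V"
  show "nb v \<subseteq> \<Union>{K \<in> MC. v \<in> K}"
  proof
    fix x assume "x \<in> nb v"
    then consider "x = v" | "(v, x) \<in> E" by (auto simp: closed_nbhd_def)
    then obtain K where "K \<in> MC" "v \<in> K" "x \<in> K"
    proof cases
      case 1
      then show ?thesis using vertex_in_max_clique[OF v] that by blast
    next
      case 2
      then show ?thesis using edge_in_max_clique that by blast
    qed
    then show "x \<in> \<Union>{K \<in> MC. v \<in> K}" by blast
  qed
qed (use max_clique_subset_closed_nbhd in blast)

lemma finite_classes_meeting: "finite (meets S)"
  using finite_eq_classes by (simp add: classes_meeting_def)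

lemma classes_meeting_mono: "S \<subseteq> T \<Longrightarrow> meets S \<subseteq> meets T"
  by (auto simp: classes_meeting_def)

lemma eq_class_in_classes_meeting: "x \<in> S \<Longrightarrow> x \<in> V \<Longrightarrow> cls x \<in> meets S"
  using eq_class_in_eq_classes eq_class_self by (auto simp: classes_meeting_def)

lemma classes_meeting_subset_image: "S \<subseteq> V \<Longrightarrow> meets S \<subseteq> cls ` S"
  unfolding classes_meeting_def using eq_classesD by blast

lemma subset_Union_classes_meeting: "S \<subseteq> V \<Longrightarrow> S \<subseteq> \<Union>(meets S)"
  using eq_class_in_classes_meeting eq_class_self by blast

lemma Union_classes_meeting_max_clique:
  assumes "K \<in> MC"
  shows "\<Union>(meets K) = K"
proof
  show "\<Union>(meets K) \<subseteq> K"
    unfolding classes_meeting_def using eq_class_subset_max_clique[OF assms] by blast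
qed (rule subset_Union_classes_meeting[OF max_clique_subset[OF assms]])

lemma Union_classes_meeting_closed_nbhd:
  assumes "v \<in> V"
  shows "\<Union>(meets (nb v)) = nb v"
proof
  show "\<Union>(meets (nb v)) \<subseteq> nb v"
    unfolding classes_meeting_def using eq_class_subset_closed_nbhd[OF assms] by blast
qed (rule subset_Union_classes_meeting[OF closed_nbhd_subset[OF assms]])

lemma inj_on_eq_class_indep:
  assumes "is_indep V E I"
  shows "inj_on cls I"
proof (rule inj_onI, rule ccontr)
  fix x y assume xy: "x \<in> I" "y \<in> I" "cls x = cls y" "x \<noteq> y"
  have "x \<in> V" using assms xy(1) by (auto simp: is_indep_def)
  then have "eqv x y" using eq_class_self xy(3) mem_eq_class_iff by blast
  then have "(x, y) \<in> E" using clique_equiv_adjacent \<open>x \<in> V\<close> xy(4) by blast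
  then show False using assms xy(1,2) by (auto simp: is_indep_def)
qed

lemma card_indep_le_classes_meeting:
  assumes "I \<subseteq> S" "is_indep V E I"
  shows "card I \<le> card (meets S)"
proof -
  have "I \<subseteq> V" using assms(2) by (simp add: is_indep_def)
  then have "cls ` I \<subseteq> meets S" using assms(1) eq_class_in_classes_meeting by blast
  then have "card (cls ` I) \<le> card (meets S)" by (rule card_mono[OF finite_classes_meeting])
  then show ?thesis using card_image[OF inj_on_eq_class_indep[OF assms(2)]] by simp
qed

lemma classes_meeting_closed_nbhd:
  assumes v: "v \<in> V"
  shows "meets (nb v) = insert (cls v) {D \<in> CL. quot_adj V E (cls v) D}"
proof (intro equalityI subsetI)
  fix X assume X: "X \<in> meets (nb v)"
  then obtain x where x: "x \<in> X" "x \<in> nb v" "X \<in> CL" by (auto simp: classes_meeting_def)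
  show "X \<in> insert (cls v) {D \<in> CL. quot_adj V E (cls v) D}"
  proof (cases "X = cls v")
    case False
    then have "x \<noteq> v" using eq_classesD[OF x(3) x(1)] by auto
    then have "(v, x) \<in> E" using x(2) by (simp add: closed_nbhd_def)
    then show ?thesis using False eq_class_self[OF v] x unfolding quot_adj_def by auto
  qed simp
next
  fix D assume D: "D \<in> insert (cls v) {D \<in> CL. quot_adj V E (cls v) D}"
  show "D \<in> meets (nb v)"
  proof (cases "D = cls v")
    case True
    then show ?thesis using eq_class_in_classes_meeting v by (simp add: closed_nbhd_def)
  next
    case False
    then obtain x y where xy: "x \<in> cls v" "y \<in> D" "(x, y) \<in> E" "D \<in> CL"
      using D unfolding quot_adj_def by auto
    have "y \<noteq> v" using eq_classesD[OF xy(4) xy(2)] False by auto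
    then have "(v, y) \<in> E" using clique_equiv_edge xy(1,3) mem_eq_class_iff by blast
    then have "y \<in> nb v" using edge_vertices by (auto simp: closed_nbhd_def)
    then show ?thesis using xy(2,4) by (auto simp: classes_meeting_def)
  qed
qed

lemma card_classes_meeting_closed_nbhd:
  "v \<in> V \<Longrightarrow> card (meets (nb v)) = Suc (card {D \<in> CL. quot_adj V E (cls v) D})"
  using finite_eq_classes by (simp add: classes_meeting_closed_nbhd quot_adj_def)

lemma card_classes_meeting_closed_nbhd_le: "v \<in> V \<Longrightarrow> card (meets (nb v)) \<le> max_nbhd_classes V E"
  unfolding max_nbhd_classes_def by (rule maxn_image_ge[OF finite_V])

lemma max_nbhd_classes_leI:
  "(\<And>v. v \<in> V \<Longrightarrow> card (meets (nb v)) \<le> b) \<Longrightarrow> max_nbhd_classes V E \<le> b"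
  unfolding max_nbhd_classes_def by (rule maxn_image_le[OF finite_V])

lemma card_classes_meeting_le_quot_omega: "K \<in> MC \<Longrightarrow> card (meets K) \<le> quot_omega V E"
  unfolding quot_omega_def classes_meeting_def by (rule maxn_image_ge[OF finite_max_cliques])

lemma card_max_cliques_containing_le_cideg: "v \<in> V \<Longrightarrow> card {K \<in> MC. v \<in> K} \<le> cideg V E"
  unfolding cideg_def by (rule maxn_image_ge[OF finite_V])

lemma card_intersecting_max_cliques_le_cdeg:
  "K \<in> MC \<Longrightarrow> card {K' \<in> MC. K' \<noteq> K \<and> K' \<inter> K \<noteq> {}} \<le> cdeg V E"
  unfolding cdeg_def by (rule maxn_image_ge[OF finite_max_cliques])

lemma alpha_on_le_alpha_star: "v \<in> V \<Longrightarrow> alpha_on V E (nb v) \<le> alpha_star V E"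
  unfolding alpha_star_def by (rule maxn_image_ge[OF finite_V])

lemma theta_on_le_theta_star: "v \<in> V \<Longrightarrow> theta_on V E (nb v) \<le> theta_star V E"
  unfolding theta_star_def by (rule maxn_image_ge[OF finite_V])

lemma finite_indep_cards: "finite {card I | I. I \<subseteq> S \<and> is_indep V E I}"
proof (rule finite_subset)
  show "{card I | I. I \<subseteq> S \<and> is_indep V E I} \<subseteq> {..card V}"
    using card_mono[OF finite_V] by (auto simp: is_indep_def)
qed simp

lemma card_indep_le_alpha_on: "I \<subseteq> S \<Longrightarrow> is_indep V E I \<Longrightarrow> card I \<le> alpha_on V E S"
  unfolding alpha_on_def by (rule maxn_ge[OF finite_indep_cards]) blast

lemma alpha_on_le_card_classes_meeting: "alpha_on V E S \<le> card (meets S)"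
  unfolding alpha_on_def
  by (rule maxn_le[OF finite_indep_cards]) (auto intro: card_indep_le_classes_meeting)

lemma theta_on_le:
  assumes "finite \<C>" "\<forall>C\<in>\<C>. C \<subseteq> S \<and> is_clique V E C" "\<Union>\<C> = S"
  shows "theta_on V E S \<le> card \<C>"
  unfolding theta_on_def by (rule Least_le) (use assms in blast)

lemma theta_on_cover:
  assumes "finite S" "S \<subseteq> V"
  obtains \<C> where "finite \<C>" "card \<C> = theta_on V E S"
    "\<forall>C\<in>\<C>. C \<subseteq> S \<and> is_clique V E C" "\<Union>\<C> = S"
proof -
  let ?P = "\<lambda>k. \<exists>\<C>. finite \<C> \<and> card \<C> = k \<and> (\<forall>C\<in>\<C>. C \<subseteq> S \<and> is_clique V E C) \<and> \<Union>\<C> = S"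
  have "\<forall>C\<in>(\<lambda>x. {x}) ` S. C \<subseteq> S \<and> is_clique V E C"
    using assms(2) by (auto simp: is_clique_def)
  then have "?P (card ((\<lambda>x. {x}) ` S))" using assms(1) by blast
  then have "?P (theta_on V E S)" unfolding theta_on_def by (rule LeastI)
  then show ?thesis using that by blast
qed

lemma card_classes_meeting_clique_le:
  assumes "is_clique V E C"
  shows "card (meets C) \<le> quot_omega V E"
proof -
  obtain K where K: "K \<in> MC" "C \<subseteq> K" using clique_subset_max_clique assms by blast
  have "card (meets C) \<le> card (meets K)"
    using classes_meeting_mono[OF K(2)] by (rule card_mono[OF finite_classes_meeting])
  then show ?thesis using card_classes_meeting_le_quot_omega[OF K(1)] by simp
qed

lemma card_classes_meeting_Union_cliques:
  assumes "finite \<C>" "\<forall>C\<in>\<C>. is_clique V E C"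
  shows "card (meets (\<Union>\<C>)) \<le> card \<C> * quot_omega V E"
proof -
  have "meets (\<Union>\<C>) = (\<Union>C\<in>\<C>. meets C)" by (auto simp: classes_meeting_def)
  also have "card \<dots> \<le> card \<C> * quot_omega V E"
    using assms card_classes_meeting_clique_le by (intro card_UN_le_mult) auto
  finally show ?thesis .
qed

subsection \<open>Upper bounds in terms of the classes meeting a closed neighbourhood\<close>

lemma quot_Delta_le_max_nbhd_classes: "quot_Delta V E \<le> max_nbhd_classes V E"
  unfolding quot_Delta_def
proof (rule maxn_le)
  fix k assume "k \<in> (\<lambda>C. card {D \<in> CL. quot_adj V E C D}) ` CL"
  then obtain v where v: "v \<in> V" and k: "k = card {D \<in> CL. quot_adj V E (cls v) D}"
    by (auto simp: eq_classes_eq)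
  then have "k < card (meets (nb v))" using card_classes_meeting_closed_nbhd by simp
  then show "k \<le> max_nbhd_classes V E" using card_classes_meeting_closed_nbhd_le[OF v] by simp
qed (simp add: finite_eq_classes)

lemma quot_omega_le_max_nbhd_classes: "quot_omega V E \<le> max_nbhd_classes V E"
  unfolding quot_omega_def
proof (rule maxn_image_le[OF finite_max_cliques])
  fix K assume K: "K \<in> MC"
  show "card {C \<in> CL. C \<inter> K \<noteq> {}} \<le> max_nbhd_classes V E"
  proof (cases "K = {}")
    case False
    then obtain v where v: "v \<in> K" by blast
    then have "v \<in> V" using max_clique_subset[OF K] by blast
    have "meets K \<subseteq> meets (nb v)"
      by (rule classes_meeting_mono[OF max_clique_subset_closed_nbhd[OF K v]])
    then have "card (meets K) \<le> card (meets (nb v))" by (rule card_mono[OF finite_classes_meeting])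
    then show ?thesis
      using card_classes_meeting_closed_nbhd_le[OF \<open>v \<in> V\<close>] by (simp add: classes_meeting_def)
  qed simp
qed

lemma card_max_cliques_containing_le:
  assumes v: "v \<in> V"
  shows "card {K \<in> MC. v \<in> K} \<le> 2 ^ card (meets (nb v))"
proof -
  have "inj_on meets {K \<in> MC. v \<in> K}"
  proof (rule inj_onI)
    fix K K' assume "K \<in> {K \<in> MC. v \<in> K}" "K' \<in> {K \<in> MC. v \<in> K}" "meets K = meets K'"
    then show "K = K'" using Union_classes_meeting_max_clique by (metis mem_Collect_eq)
  qed
  moreover have "meets ` {K \<in> MC. v \<in> K} \<subseteq> Pow (meets (nb v))"
    using classes_meeting_mono max_clique_subset_closed_nbhd by blast
  ultimately have "card {K \<in> MC. v \<in> K} \<le> card (Pow (meets (nb v)))"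
    by (rule card_inj_on_le) (simp add: finite_classes_meeting)
  then show ?thesis by (simp add: card_Pow finite_classes_meeting)
qed

lemma cideg_le_pow_max_nbhd_classes: "cideg V E \<le> 2 ^ max_nbhd_classes V E"
  unfolding cideg_def
proof (rule maxn_image_le[OF finite_V])
  fix v assume v: "v \<in> V"
  have "card {K \<in> MC. v \<in> K} \<le> 2 ^ card (meets (nb v))"
    by (rule card_max_cliques_containing_le[OF v])
  also have "\<dots> \<le> 2 ^ max_nbhd_classes V E"
    using card_classes_meeting_closed_nbhd_le[OF v] by (simp add: power_increasing)
  finally show "card {K \<in> MC. v \<in> K} \<le> 2 ^ max_nbhd_classes V E" .
qed

lemma cdeg_le_quot_omega_mult_cideg: "cdeg V E \<le> quot_omega V E * cideg V E"
  unfolding cdeg_def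
proof (rule maxn_image_le[OF finite_max_cliques])
  fix K assume K: "K \<in> MC"
  \<comment> \<open>A maximal clique meeting \<open>K\<close> contains a whole class meeting \<open>K\<close>.\<close>
  have "{K' \<in> MC. K' \<noteq> K \<and> K' \<inter> K \<noteq> {}} \<subseteq> (\<Union>X\<in>meets K. {K' \<in> MC. X \<subseteq> K'})"
  proof
    fix K' assume "K' \<in> {K' \<in> MC. K' \<noteq> K \<and> K' \<inter> K \<noteq> {}}"
    then obtain x where x: "K' \<in> MC" "x \<in> K'" "x \<in> K" by blast
    then have "x \<in> V" using max_clique_subset[OF K] by blast
    then have "cls x \<in> meets K" "cls x \<subseteq> K'"
      using x eq_class_in_classes_meeting eq_class_in_eq_classes eq_class_self
        eq_class_subset_max_clique by blast+
    then show "K' \<in> (\<Union>X\<in>meets K. {K' \<in> MC. X \<subseteq> K'})" using x(1) by blast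
  qed
  then have "card {K' \<in> MC. K' \<noteq> K \<and> K' \<inter> K \<noteq> {}} \<le> card (\<Union>X\<in>meets K. {K' \<in> MC. X \<subseteq> K'})"
    by (rule card_mono[rotated]) (simp add: finite_classes_meeting finite_max_cliques)
  also have "\<dots> \<le> card (meets K) * cideg V E"
  proof (rule card_UN_le_mult[OF finite_classes_meeting])
    fix X assume "X \<in> meets K"
    then have "X \<in> CL" by (simp add: classes_meeting_def)
    then obtain x where x: "x \<in> X" using eq_class_nonempty by blast
    then have "x \<in> V" using eq_classesD(2)[OF \<open>X \<in> CL\<close>] by blast
    have "{K' \<in> MC. X \<subseteq> K'} \<subseteq> {K' \<in> MC. x \<in> K'}" using x by blast
    then have "card {K' \<in> MC. X \<subseteq> K'} \<le> card {K' \<in> MC. x \<in> K'}"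
      by (rule card_mono[rotated]) (simp add: finite_max_cliques)
    then show "card {K' \<in> MC. X \<subseteq> K'} \<le> cideg V E"
      using card_max_cliques_containing_le_cideg[OF \<open>x \<in> V\<close>] by simp
  qed
  also have "\<dots> \<le> quot_omega V E * cideg V E"
    using card_classes_meeting_le_quot_omega[OF K] by simp
  finally show "card {K' \<in> MC. K' \<noteq> K \<and> K' \<inter> K \<noteq> {}} \<le> quot_omega V E * cideg V E" .
qed

lemma alpha_star_le_max_nbhd_classes: "alpha_star V E \<le> max_nbhd_classes V E"
  unfolding alpha_star_def
  using alpha_on_le_card_classes_meeting card_classes_meeting_closed_nbhd_le
  by (intro maxn_image_le[OF finite_V]) (rule le_trans)

lemma theta_on_closed_nbhd_le_card_classes_meeting:
  assumes v: "v \<in> V"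
  shows "theta_on V E (nb v) \<le> card (meets (nb v))"
proof (rule theta_on_le[OF finite_classes_meeting])
  show "\<forall>X\<in>meets (nb v). X \<subseteq> nb v \<and> is_clique V E X"
    using eq_class_subset_closed_nbhd[OF v] eq_class_is_clique by (auto simp: classes_meeting_def)
qed (rule Union_classes_meeting_closed_nbhd[OF v])

lemma theta_star_le_max_nbhd_classes: "theta_star V E \<le> max_nbhd_classes V E"
  unfolding theta_star_def
  using theta_on_closed_nbhd_le_card_classes_meeting card_classes_meeting_closed_nbhd_le
  by (intro maxn_image_le[OF finite_V]) (rule le_trans)

subsection \<open>Lower bounds for the classes meeting a closed neighbourhood\<close>

lemma max_nbhd_classes_le_quot_Delta: "max_nbhd_classes V E \<le> quot_Delta V E + 1"
proof (rule max_nbhd_classes_leI)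
  fix v assume v: "v \<in> V"
  have "card {D \<in> CL. quot_adj V E (cls v) D} \<le> quot_Delta V E"
    unfolding quot_Delta_def using eq_class_in_eq_classes[OF v] finite_eq_classes
    by (intro maxn_ge) auto
  then show "card (meets (nb v)) \<le> quot_Delta V E + 1"
    using card_classes_meeting_closed_nbhd[OF v] by simp
qed

lemma card_classes_meeting_closed_nbhd_le_cideg_mult_quot_omega:
  assumes v: "v \<in> V"
  shows "card (meets (nb v)) \<le> cideg V E * quot_omega V E"
proof -
  have "card (meets (nb v)) \<le> card {K \<in> MC. v \<in> K} * quot_omega V E"
    unfolding closed_nbhd_eq_Union_max_cliques[OF v]
    by (rule card_classes_meeting_Union_cliques) (auto simp: finite_max_cliques max_clique_is_clique)
  also have "\<dots> \<le> cideg V E * quot_omega V E"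
    using card_max_cliques_containing_le_cideg[OF v] by simp
  finally show ?thesis .
qed

lemma cideg_le_cdeg: "cideg V E \<le> cdeg V E + 1"
  unfolding cideg_def
proof (rule maxn_image_le[OF finite_V])
  fix v assume v: "v \<in> V"
  obtain K where K: "K \<in> MC" "v \<in> K" by (rule vertex_in_max_clique[OF v])
  have "{K' \<in> MC. v \<in> K'} \<subseteq> insert K {K' \<in> MC. K' \<noteq> K \<and> K' \<inter> K \<noteq> {}}" using K by blast
  then have "card {K' \<in> MC. v \<in> K'} \<le> card (insert K {K' \<in> MC. K' \<noteq> K \<and> K' \<inter> K \<noteq> {}})"
    by (rule card_mono[rotated]) (simp add: finite_max_cliques)
  also have "\<dots> \<le> Suc (card {K' \<in> MC. K' \<noteq> K \<and> K' \<inter> K \<noteq> {}})"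
    by (simp add: card_insert_if finite_max_cliques)
  finally show "card {K' \<in> MC. v \<in> K'} \<le> cdeg V E + 1"
    using card_intersecting_max_cliques_le_cdeg[OF K(1)] by simp
qed

text \<open>Two classes inside the maximal clique \<open>K\<close> lying in the same other maximal cliques lie in
  the same maximal cliques altogether, hence coincide.\<close>

lemma card_classes_meeting_max_clique_le:
  assumes K: "K \<in> MC"
  shows "card (meets K) \<le> 2 ^ card {K' \<in> MC. K' \<noteq> K \<and> K' \<inter> K \<noteq> {}}"
proof -
  let ?others = "{K' \<in> MC. K' \<noteq> K \<and> K' \<inter> K \<noteq> {}}"
  define f where "f X = {K' \<in> MC. K' \<noteq> K \<and> X \<subseteq> K'}" for X
  have in_K: "X \<in> CL \<and> X \<subseteq> K" if "X \<in> meets K" for X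
    using that eq_class_subset_max_clique[OF K] by (auto simp: classes_meeting_def)
  have "inj_on f (meets K)"
  proof (rule inj_onI)
    fix X Y assume X: "X \<in> meets K" and Y: "Y \<in> meets K" and fXY: "f X = f Y"
    have "X \<noteq> {}" "Y \<noteq> {}" using in_K[OF X] in_K[OF Y] eq_class_nonempty by simp_all
    then obtain x y where xy: "x \<in> X" "y \<in> Y" by blast
    have "x \<in> K' \<longleftrightarrow> y \<in> K'" if "K' \<in> MC" for K'
    proof (cases "K' = K")
      case True
      then show ?thesis using in_K X Y xy by blast
    next
      case False
      then have "X \<subseteq> K' \<longleftrightarrow> Y \<subseteq> K'" using fXY that unfolding f_def set_eq_iff by blast
      then show ?thesis using mem_max_clique_iff_eq_class_subset that in_K X Y xy by blast
    qed
    then have "eqv x y" unfolding clique_equiv_def by (intro Collect_cong) blast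
    moreover have "X = cls x" "Y = cls y" "x \<in> V"
      using eq_classesD in_K[OF X] in_K[OF Y] xy by blast+
    ultimately show "X = Y" using eq_class_eq mem_eq_class_iff by metis
  qed
  moreover have "f ` meets K \<subseteq> Pow ?others"
    using in_K eq_class_nonempty unfolding f_def by blast
  ultimately have "card (meets K) \<le> card (Pow ?others)"
    by (rule card_inj_on_le) (simp add: finite_max_cliques)
  then show ?thesis by (simp add: card_Pow finite_max_cliques)
qed

lemma quot_omega_le_pow_cdeg: "quot_omega V E \<le> 2 ^ cdeg V E"
  unfolding quot_omega_def
proof (rule maxn_image_le[OF finite_max_cliques])
  fix K assume K: "K \<in> MC"
  have "card (meets K) \<le> 2 ^ card {K' \<in> MC. K' \<noteq> K \<and> K' \<inter> K \<noteq> {}}"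
    by (rule card_classes_meeting_max_clique_le[OF K])
  also have "\<dots> \<le> 2 ^ cdeg V E"
    using card_intersecting_max_cliques_le_cdeg[OF K] by (simp add: power_increasing)
  finally show "card {C \<in> CL. C \<inter> K \<noteq> {}} \<le> 2 ^ cdeg V E" by (simp add: classes_meeting_def)
qed

lemma card_classes_meeting_closed_nbhd_le_theta_mult_quot_omega:
  assumes v: "v \<in> V"
  shows "card (meets (nb v)) \<le> theta_on V E (nb v) * quot_omega V E"
proof -
  have "finite (nb v)" using finite_subset[OF closed_nbhd_subset[OF v] finite_V] .
  then obtain \<C> where \<C>: "finite \<C>" "card \<C> = theta_on V E (nb v)"
    "\<forall>C\<in>\<C>. C \<subseteq> nb v \<and> is_clique V E C" "\<Union>\<C> = nb v"
    using theta_on_cover closed_nbhd_subset[OF v] by blast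
  then show ?thesis using card_classes_meeting_Union_cliques[of \<C>] by simp
qed

abbreviation "undirected_edges \<equiv> {{x, y} | x y. (x, y) \<in> E}"

lemma doubleton_in_undirected_edges_iff: "{x, y} \<in> undirected_edges \<longleftrightarrow> (x, y) \<in> E"
proof
  assume "{x, y} \<in> undirected_edges"
  then obtain a b where "{x, y} = {a, b}" "(a, b) \<in> E" by blast
  then show "(x, y) \<in> E" using edge_sym[of a b] by (auto simp: doubleton_eq_iff)
qed blast

lemma is_clique_if_clique:
  assumes "R \<subseteq> V" "clique R undirected_edges"
  shows "is_clique V E R"
  unfolding is_clique_def
proof (intro conjI ballI impI)
  fix x y assume "x \<in> R" "y \<in> R" "x \<noteq> y"
  then have "{x, y} \<in> undirected_edges" using assms(2) unfolding clique_def by blast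
  then show "(x, y) \<in> E" using doubleton_in_undirected_edges_iff[of x y] by blast
qed (rule assms(1))

lemma is_indep_if_indep:
  assumes "R \<subseteq> V" "indep R undirected_edges"
  shows "is_indep V E R"
  unfolding is_indep_def
proof (intro conjI ballI)
  fix x y assume xy: "x \<in> R" "y \<in> R"
  show "(x, y) \<notin> E"
  proof (cases "x = y")
    case False
    then have "{x, y} \<notin> undirected_edges" using assms(2) xy unfolding indep_def by blast
    then show ?thesis using doubleton_in_undirected_edges_iff[of x y] by blast
  qed (simp add: edge_irrefl)
qed (rule assms(1))

lemma card_lt_ramsey_number:
  assumes "S \<subseteq> V"
    and "\<And>I. I \<subseteq> S \<Longrightarrow> is_indep V E I \<Longrightarrow> card I < k"
    and "\<And>C. C \<subseteq> S \<Longrightarrow> is_clique V E C \<Longrightarrow> card C < k"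
  shows "card S < ramsey_number k"
proof (rule ccontr)
  assume "\<not> card S < ramsey_number k"
  then have "ramsey_number k \<le> card S" by simp
  with finite_subset[OF assms(1) finite_V] obtain R
    where R: "R \<subseteq> S" "card R = k" "clique R undirected_edges \<or> indep R undirected_edges"
    by (rule ramsey_numberE)
  have "R \<subseteq> V" using R(1) assms(1) by blast
  then have "card R < k"
    using R(3) assms(2,3)[OF R(1)] is_clique_if_clique[OF \<open>R \<subseteq> V\<close>]
      is_indep_if_indep[OF \<open>R \<subseteq> V\<close>]
    by (elim disjE) simp_all
  then show False using R(2) by simp
qed

text \<open>One representative of each class meeting \<open>N[v]\<close> gives a vertex set of the same size
  whose cliques see as many classes as they have vertices.\<close>

lemma card_classes_meeting_closed_nbhd_lt_ramsey_number:
  assumes v: "v \<in> V"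
  shows "card (meets (nb v)) < ramsey_number (max (alpha_star V E) (quot_omega V E) + 1)"
proof -
  obtain R where R: "R \<subseteq> nb v" "inj_on cls R" "meets (nb v) = cls ` R"
    using iffD1[OF subset_image_inj classes_meeting_subset_image[OF closed_nbhd_subset[OF v]]]
    by blast
  have RV: "R \<subseteq> V" using R(1) closed_nbhd_subset[OF v] by blast
  have "card R < ramsey_number (max (alpha_star V E) (quot_omega V E) + 1)"
  proof (rule card_lt_ramsey_number[OF RV])
    fix I assume I: "I \<subseteq> R" "is_indep V E I"
    then have "card I \<le> alpha_on V E (nb v)"
      using R(1) by (intro card_indep_le_alpha_on) auto
    then show "card I < max (alpha_star V E) (quot_omega V E) + 1"
      using alpha_on_le_alpha_star[OF v] by simp
  next
    fix C assume C: "C \<subseteq> R" "is_clique V E C"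
    have "card C = card (cls ` C)" using inj_on_subset[OF R(2) C(1)] by (simp add: card_image)
    also have "\<dots> \<le> card (meets C)"
      using C(1) RV eq_class_in_classes_meeting by (intro card_mono[OF finite_classes_meeting]) auto
    also have "\<dots> \<le> quot_omega V E" by (rule card_classes_meeting_clique_le[OF C(2)])
    finally show "card C < max (alpha_star V E) (quot_omega V E) + 1" by simp
  qed
  then show ?thesis using R(2,3) by (simp add: card_image)
qed

lemma cdeg_le_max_nbhd_classes: "cdeg V E \<le> max_nbhd_classes V E * 2 ^ max_nbhd_classes V E"
  using cdeg_le_quot_omega_mult_cideg quot_omega_le_max_nbhd_classes cideg_le_pow_max_nbhd_classes
  by (meson le_trans mult_le_mono)

lemma max_cideg_quot_omega_le_max_nbhd_classes:
  "max (cideg V E) (quot_omega V E) \<le> 2 ^ max_nbhd_classes V E"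
proof -
  have "quot_omega V E \<le> 2 ^ max_nbhd_classes V E"
    using quot_omega_le_max_nbhd_classes less_exp[of "max_nbhd_classes V E"] by linarith
  then show ?thesis using cideg_le_pow_max_nbhd_classes by simp
qed

lemma max_alpha_star_quot_omega_le_max_nbhd_classes:
  "max (alpha_star V E) (quot_omega V E) \<le> max_nbhd_classes V E"
  using alpha_star_le_max_nbhd_classes quot_omega_le_max_nbhd_classes by simp

lemma max_theta_star_quot_omega_le_max_nbhd_classes:
  "max (theta_star V E) (quot_omega V E) \<le> max_nbhd_classes V E"
  using theta_star_le_max_nbhd_classes quot_omega_le_max_nbhd_classes by simp

lemma max_nbhd_classes_le_cdeg: "max_nbhd_classes V E \<le> (cdeg V E + 1) * 2 ^ cdeg V E"
proof (rule max_nbhd_classes_leI)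
  fix v assume "v \<in> V"
  then have "card (meets (nb v)) \<le> cideg V E * quot_omega V E"
    by (rule card_classes_meeting_closed_nbhd_le_cideg_mult_quot_omega)
  also have "\<dots> \<le> (cdeg V E + 1) * 2 ^ cdeg V E"
    using cideg_le_cdeg quot_omega_le_pow_cdeg by (rule mult_le_mono)
  finally show "card (meets (nb v)) \<le> (cdeg V E + 1) * 2 ^ cdeg V E" .
qed

lemma max_nbhd_classes_le_max_cideg_quot_omega:
  "max_nbhd_classes V E \<le> max (cideg V E) (quot_omega V E) * max (cideg V E) (quot_omega V E)"
proof (rule max_nbhd_classes_leI)
  fix v assume "v \<in> V"
  then have "card (meets (nb v)) \<le> cideg V E * quot_omega V E"
    by (rule card_classes_meeting_closed_nbhd_le_cideg_mult_quot_omega)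
  also have "\<dots> \<le> max (cideg V E) (quot_omega V E) * max (cideg V E) (quot_omega V E)"
    by (intro mult_le_mono) simp_all
  finally show "card (meets (nb v)) \<le> \<dots>" .
qed

lemma max_nbhd_classes_le_max_alpha_star_quot_omega:
  "max_nbhd_classes V E \<le> ramsey_number (max (alpha_star V E) (quot_omega V E) + 1)"
  using card_classes_meeting_closed_nbhd_lt_ramsey_number
  by (intro max_nbhd_classes_leI less_imp_le)

lemma max_nbhd_classes_le_max_theta_star_quot_omega:
  "max_nbhd_classes V E \<le> max (theta_star V E) (quot_omega V E) * max (theta_star V E) (quot_omega V E)"
proof (rule max_nbhd_classes_leI)
  fix v assume v: "v \<in> V"
  then have "card (meets (nb v)) \<le> theta_on V E (nb v) * quot_omega V E"
    by (rule card_classes_meeting_closed_nbhd_le_theta_mult_quot_omega)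
  also have "\<dots> \<le> max (theta_star V E) (quot_omega V E) * max (theta_star V E) (quot_omega V E)"
    using theta_on_le_theta_star[OF v] by (intro mult_le_mono) simp_all
  finally show "card (meets (nb v)) \<le> \<dots>" .
qed

end

definition bounded_by ::
  "(nat set \<Rightarrow> (nat \<times> nat) set \<Rightarrow> nat) \<Rightarrow> (nat set \<Rightarrow> (nat \<times> nat) set \<Rightarrow> nat) \<Rightarrow> bool" where
  "bounded_by q p \<longleftrightarrow> (\<exists>g :: nat \<Rightarrow> nat. \<forall>V E. simple_graph V E \<longrightarrow> q V E \<le> g (p V E))"

lemma bounded_byI:
  "(\<And>V E. finite_simple_graph V E \<Longrightarrow> q V E \<le> g (p V E)) \<Longrightarrow> bounded_by q p"
  unfolding bounded_by_def using finite_simple_graph.intro by blast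

lemma bounded_by_trans:
  assumes "bounded_by q r" "bounded_by r p"
  shows "bounded_by q p"
proof -
  obtain f where f: "\<forall>V E. simple_graph V E \<longrightarrow> q V E \<le> f (r V E)"
    using assms(1) unfolding bounded_by_def by blast
  obtain h where h: "\<forall>V E. simple_graph V E \<longrightarrow> r V E \<le> h (p V E)"
    using assms(2) unfolding bounded_by_def by blast
  \<comment> \<open>\<open>f\<close> need not be monotone: take its maximum below the bound \<open>h\<close>.\<close>
  show ?thesis
  proof (rule bounded_byI[where g = "\<lambda>n. Max (f ` {..h n})"])
    fix V E assume "finite_simple_graph V E"
    then have "q V E \<le> f (r V E)" "r V E \<le> h (p V E)" using f h finite_simple_graph.simple by blast+
    moreover have "f (r V E) \<le> Max (f ` {..h (p V E)})"
      using \<open>r V E \<le> h (p V E)\<close> by (intro Max_ge) auto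
    ultimately show "q V E \<le> Max (f ` {..h (p V E)})" by linarith
  qed
qed

lemma bounded_by_quot_Delta:
  "bounded_by quot_Delta max_nbhd_classes" "bounded_by max_nbhd_classes quot_Delta"
  by (rule bounded_byI, erule finite_simple_graph.quot_Delta_le_max_nbhd_classes,
      rule bounded_byI, erule finite_simple_graph.max_nbhd_classes_le_quot_Delta)

lemma bounded_by_cdeg:
  "bounded_by cdeg max_nbhd_classes" "bounded_by max_nbhd_classes cdeg"
  by (rule bounded_byI, erule finite_simple_graph.cdeg_le_max_nbhd_classes,
      rule bounded_byI, erule finite_simple_graph.max_nbhd_classes_le_cdeg)

lemma bounded_by_max_cideg_quot_omega:
  "bounded_by (\<lambda>V E. max (cideg V E) (quot_omega V E)) max_nbhd_classes"
  "bounded_by max_nbhd_classes (\<lambda>V E. max (cideg V E) (quot_omega V E))"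
  by (rule bounded_byI, erule finite_simple_graph.max_cideg_quot_omega_le_max_nbhd_classes,
      rule bounded_byI, erule finite_simple_graph.max_nbhd_classes_le_max_cideg_quot_omega)

lemma bounded_by_max_alpha_star_quot_omega:
  "bounded_by (\<lambda>V E. max (alpha_star V E) (quot_omega V E)) max_nbhd_classes"
  "bounded_by max_nbhd_classes (\<lambda>V E. max (alpha_star V E) (quot_omega V E))"
  by (rule bounded_byI, erule finite_simple_graph.max_alpha_star_quot_omega_le_max_nbhd_classes,
      rule bounded_byI, erule finite_simple_graph.max_nbhd_classes_le_max_alpha_star_quot_omega)

lemma bounded_by_max_theta_star_quot_omega:
  "bounded_by (\<lambda>V E. max (theta_star V E) (quot_omega V E)) max_nbhd_classes"
  "bounded_by max_nbhd_classes (\<lambda>V E. max (theta_star V E) (quot_omega V E))"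
  by (rule bounded_byI, erule finite_simple_graph.max_theta_star_quot_omega_le_max_nbhd_classes,
      rule bounded_byI, erule finite_simple_graph.max_nbhd_classes_le_max_theta_star_quot_omega)

theorem corollary5p4:
  shows "\<forall>p \<in> {quot_Delta, cdeg,
                 (\<lambda>V E. max (cideg V E) (quot_omega V E)),
                 (\<lambda>V E. max (alpha_star V E) (quot_omega V E)),
                 (\<lambda>V E. max (theta_star V E) (quot_omega V E))}.
         \<forall>q \<in> {quot_Delta, cdeg,
                 (\<lambda>V E. max (cideg V E) (quot_omega V E)),
                 (\<lambda>V E. max (alpha_star V E) (quot_omega V E)),
                 (\<lambda>V E. max (theta_star V E) (quot_omega V E))}.
           \<exists>g :: nat \<Rightarrow> nat. \<forall>V E. simple_graph V E \<longrightarrow> q V E \<le> g (p V E)"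
proof -
  let ?S = "{quot_Delta, cdeg,
                 (\<lambda>V E. max (cideg V E) (quot_omega V E)),
                 (\<lambda>V E. max (alpha_star V E) (quot_omega V E)),
                 (\<lambda>V E. max (theta_star V E) (quot_omega V E))}"
  have hub: "bounded_by p max_nbhd_classes \<and> bounded_by max_nbhd_classes p" if "p \<in> ?S" for p
    using that bounded_by_quot_Delta bounded_by_cdeg bounded_by_max_cideg_quot_omega
      bounded_by_max_alpha_star_quot_omega bounded_by_max_theta_star_quot_omega
    by auto
  have "bounded_by q p" if "p \<in> ?S" "q \<in> ?S" for p q
    using hub[OF that(1)] hub[OF that(2)] bounded_by_trans by blast
  then show ?thesis unfolding bounded_by_def by blast
qed

end
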